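(* Let $\alpha\in(0,1)$ and let the index set $\mathcal I$ be either $\{1,\dots,n\}$ for some $n\in\mathbb N$ or $\mathbb N=\{1,2,\dots\}$. Let $(p_i)_{i\in\mathcal I}$ be independent random variables taking values in $[0,1]$ such that $\mathbb P(p_i\le t)\le t$ for all $t\in[0,1]$ and all $i\in\mathcal I$. Let $u_\alpha(k)$ be either the linear boundary $$u_\alpha(k)=\sqrt{\frac{-\log\alpha}{2m}}\,k+\sqrt{\frac{-m\log\alpha}{2}}$$ for an arbitrary fixed $m>0$, or the curved boundary $$u_\alpha(k)=1.7\sqrt{k\left(\log\log(2k)+0.72\log\frac{5.2}{\alpha}\right)}.$$ Then $$\mathbb P\Big(\exists k\in\mathcal I:\ \sum_{i=1}^k\Phi^{-1}(1-p_i)\ge u_\alpha(k)\Big)\le\alpha,$$ i.e. the martingale Stouffer test, which rejects the global null when this event occurs, controls the type-I error at level $\alpha$.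
   Context: $\Phi$ denotes the standard Gaussian cumulative distribution function. The condition $\mathbb P(p_i\le t)\le t$ means that each $p_i$ is stochastically larger than a uniform random variable on $[0,1]$ (this is the situation under the global null hypothesis). *)

theory Defs
  imports "HOL-Probability.Probability"
begin

definition Phi :: "real \<Rightarrow> real" where
  "Phi x = measure (density lborel std_normal_density) {..x}"

definition Phi_inv :: "real \<Rightarrow> ereal" where
  "Phi_inv q = (if q \<le> 0 then -\<infinity> else if 1 \<le> q then \<infinity>
                else ereal (THE x. Phi x = q))"

definition u_linear :: "real \<Rightarrow> real \<Rightarrow> nat \<Rightarrow> real" where
  "u_linear \<alpha> m k = sqrt (- ln \<alpha> / (2 * m)) * real k + sqrt (- m * ln \<alpha> / 2)"

definition u_curved :: "real \<Rightarrow> nat \<Rightarrow> real" where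
  "u_curved \<alpha> k = 1.7 * sqrt (real k * (ln (ln (2 * real k)) + 0.72 * ln (5.2 / \<alpha>)))"

end

(* Under the null hypothesis the z-scores Z i = Phi_inv (1 - p i) are independent and stochastically
   dominated by standard normals, so for every l > 0 the products of exp (l * Z i - l^2 / 2) form a
   nonnegative supermartingale started at 1. By Ville's maximal inequality it reaches 1 / delta with
   probability at most delta, and for l = sqrt (2 * - ln delta / m) this event contains every crossing
   of the linear boundary u_linear delta m.
   The curved boundary dominates, on each epoch (11/5)^j <= k <= (11/5)^(j+1), the linear boundary
   tuned to the geometric mean of the epoch at level alpha * w j, where the weights w j sum to at most 1;
   a union bound over the epochs gives level alpha. *)

theory Submission
  imports Defs
begin

abbreviation N01 :: "real measure" where "N01 \<equiv> std_normal_distribution"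

interpretation N01: real_distribution N01
  by (rule real_dist_normal_dist)

lemma Phi_eq_cdf: "Phi = cdf N01"
  by (simp add: Phi_def fun_eq_iff cdf_def)

lemma emeasure_std_normal_eq_0_iff:
  assumes "A \<in> sets borel"
  shows "emeasure N01 A = 0 \<longleftrightarrow> emeasure lborel A = 0"
proof -
  have "emeasure N01 A = (\<integral>\<^sup>+z. ennreal (std_normal_density z) * indicator A z \<partial>lborel)"
    using assms by (subst emeasure_density) auto
  also have "\<dots> = 0 \<longleftrightarrow> (AE z in lborel. z \<notin> A)"
    using assms normal_density_pos[of 1 0]
    by (subst nn_integral_0_iff_AE) (auto simp: indicator_def less_le)
  also have "\<dots> \<longleftrightarrow> emeasure lborel A = 0"
    using assms by (simp add: AE_iff_measurable[OF _ refl])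
  finally show ?thesis .
qed

lemma isCont_Phi: "isCont Phi x"
  unfolding Phi_eq_cdf N01.isCont_cdf
  using emeasure_std_normal_eq_0_iff[of "{x}"] by (simp add: N01.emeasure_eq_measure)

lemma strict_mono_Phi: "strict_mono Phi"
proof
  fix x y :: real assume "x < y"
  then have "emeasure N01 {x<..y} \<noteq> 0"
    using emeasure_std_normal_eq_0_iff[of "{x<..y}"] by simp
  then have "0 < measure N01 {x<..y}"
    by (simp add: N01.emeasure_eq_measure zero_less_measure_iff)
  then show "Phi x < Phi y"
    using N01.cdf_diff_eq[OF \<open>x < y\<close>] unfolding Phi_eq_cdf by linarith
qed

lemma Phi_surj:
  assumes "0 < q" "q < 1"
  obtains z where "Phi z = q"
proof -
  have "eventually (\<lambda>x. Phi x < q) at_bot"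
    using order_tendstoD(2)[OF N01.cdf_lim_at_bot assms(1)] unfolding Phi_eq_cdf .
  then obtain a where a: "Phi a < q" by (auto simp: eventually_at_bot_linorder)
  have "eventually (\<lambda>x. q < Phi x) at_top"
    using order_tendstoD(1)[OF N01.cdf_lim_at_top_prob assms(2)] unfolding Phi_eq_cdf .
  then obtain b where b: "q < Phi b" by (auto simp: eventually_at_top_linorder)
  have "a \<le> b"
    using a b strict_mono_less[OF strict_mono_Phi, of a b] by simp
  then show ?thesis
    using IVT'[of Phi a q b] a b isCont_Phi that by (auto intro: continuous_at_imp_continuous_on)
qed

definition normal_score :: "real \<Rightarrow> real" where
  "normal_score q = (if 0 < q \<and> q < 1 then THE z. Phi z = 1 - q else 0)"

lemma Phi_normal_score:
  assumes "0 < q" "q < 1"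
  shows "Phi (normal_score q) = 1 - q"
proof -
  obtain z where z: "Phi z = 1 - q" using Phi_surj[of "1 - q"] assms by auto
  have "Phi (THE z. Phi z = 1 - q) = 1 - q"
  proof (rule theI[of _ z])
    fix x assume "Phi x = 1 - q"
    then show "x = z" using z strict_mono_eq[OF strict_mono_Phi, of x z] by simp
  qed (fact z)
  then show ?thesis using assms by (simp add: normal_score_def)
qed

lemma Phi_inv_one_minus:
  assumes "0 < q" "q < 1"
  shows "Phi_inv (1 - q) = ereal (normal_score q)"
  using assms by (simp add: Phi_inv_def normal_score_def)

lemma less_normal_score_iff:
  assumes "0 < q" "q < 1"
  shows "t < normal_score q \<longleftrightarrow> Phi t < 1 - q"
  using Phi_normal_score[OF assms] strict_mono_less[OF strict_mono_Phi] by metis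

lemma borel_measurable_normal_score [measurable]: "normal_score \<in> borel_measurable borel"
proof -
  have "mono_on {0<..<1} (\<lambda>q. - normal_score q)"
  proof (rule mono_onI)
    fix q q' :: real assume "q \<in> {0<..<1}" "q' \<in> {0<..<1}" "q \<le> q'"
    then have "Phi (normal_score q') \<le> Phi (normal_score q)"
      by (simp add: Phi_normal_score)
    then show "- normal_score q \<le> - normal_score q'"
      by (simp add: strict_mono_less_eq[OF strict_mono_Phi])
  qed
  then have "(\<lambda>q. - (- normal_score q)) \<in> borel_measurable (restrict_space borel {0<..<1})"
    by (intro borel_measurable_uminus borel_measurable_mono_on_fnc)
  then have "(\<lambda>q. if q \<in> {0<..<1} then normal_score q else 0) \<in> borel_measurable borel"
    by (subst measurable_restrict_space_iff[symmetric]) auto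
  then show ?thesis
    by (rule measurable_cong[THEN iffD1, rotated]) (auto simp: normal_score_def)
qed

lemma borel_measurable_Phi_inv [measurable]: "Phi_inv \<in> borel_measurable borel"
proof -
  have eq: "Phi_inv = (\<lambda>q. if q \<le> 0 then -\<infinity> else if 1 \<le> q then \<infinity> else ereal (normal_score (1 - q)))"
    by (simp add: fun_eq_iff Phi_inv_def normal_score_def)
  show ?thesis unfolding eq by measurable
qed

lemma nn_integral_layer_cake:
  fixes g :: "'a \<Rightarrow> real"
  assumes "sigma_finite_measure M" and g [measurable]: "g \<in> borel_measurable M"
    and nonneg: "\<And>x. 0 \<le> g x"
  shows "(\<integral>\<^sup>+x. ennreal (g x) \<partial>M) = (\<integral>\<^sup>+s. emeasure M {x\<in>space M. s < g x} * indicator {0<..} s \<partial>lborel)"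
proof -
  interpret sigma_finite_measure M by fact
  interpret pair_sigma_finite M lborel ..
  define f :: "'a \<Rightarrow> real \<Rightarrow> ennreal" where "f x s = indicator {0<..<g x} s" for x s
  have [measurable]: "case_prod f \<in> borel_measurable (M \<Otimes>\<^sub>M lborel)"
    unfolding f_def indicator_def greaterThanLessThan_iff by measurable
  have "(\<integral>\<^sup>+x. ennreal (g x) \<partial>M) = (\<integral>\<^sup>+x. (\<integral>\<^sup>+s. f x s \<partial>lborel) \<partial>M)"
    using nonneg by (intro nn_integral_cong) (simp add: f_def emeasure_lborel_Ioo)
  also have "\<dots> = (\<integral>\<^sup>+s. (\<integral>\<^sup>+x. f x s \<partial>M) \<partial>lborel)"
    by (rule Fubini'[symmetric]) measurable
  also have "\<dots> = (\<integral>\<^sup>+s. emeasure M {x\<in>space M. s < g x} * indicator {0<..} s \<partial>lborel)"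
  proof (intro nn_integral_cong)
    fix s :: real
    have "(\<integral>\<^sup>+x. f x s \<partial>M) = (\<integral>\<^sup>+x. indicator {x\<in>space M. s < g x} x * indicator {0<..} s \<partial>M)"
      by (intro nn_integral_cong) (auto simp: f_def indicator_def)
    then show "(\<integral>\<^sup>+x. f x s \<partial>M) = emeasure M {x\<in>space M. s < g x} * indicator {0<..} s"
      by (simp add: nn_integral_multc)
  qed
  finally show ?thesis .
qed

lemma nn_integral_mono_tail:
  fixes f :: "'a \<Rightarrow> real" and g :: "'b \<Rightarrow> real"
  assumes "sigma_finite_measure M" "sigma_finite_measure N"
    and "f \<in> borel_measurable M" "g \<in> borel_measurable N"
    and "\<And>x. 0 \<le> f x" "\<And>y. 0 \<le> g y"
    and tail: "\<And>s. 0 < s \<Longrightarrow> emeasure M {x\<in>space M. s < f x} \<le> emeasure N {y\<in>space N. s < g y}"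
  shows "(\<integral>\<^sup>+x. ennreal (f x) \<partial>M) \<le> (\<integral>\<^sup>+y. ennreal (g y) \<partial>N)"
  unfolding nn_integral_layer_cake[OF assms(1,3,5)] nn_integral_layer_cake[OF assms(2,4,6)]
  by (intro nn_integral_mono) (auto simp: tail indicator_def)

lemma nn_integral_std_normal_exp_tilt:
  "(\<integral>\<^sup>+z. ennreal (exp (l * z - l\<^sup>2 / 2)) \<partial>N01) = 1"
proof -
  have "(\<integral>\<^sup>+z. ennreal (exp (l * z - l\<^sup>2 / 2)) \<partial>N01) = (\<integral>\<^sup>+z. ennreal (normal_density l 1 z) \<partial>lborel)"
    by (subst nn_integral_density)
       (auto intro!: nn_integral_cong simp: ennreal_mult[symmetric] normal_density_def
          mult_exp_exp power2_eq_square field_simps)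
  also have "\<dots> = emeasure (density lborel (normal_density l 1)) UNIV"
    by (subst emeasure_density) auto
  also have "\<dots> = 1"
    using prob_space.emeasure_space_1[OF prob_space_normal_density[of 1 l]] by simp
  finally show ?thesis .
qed

definition stouffer_factor :: "real \<Rightarrow> real \<Rightarrow> real" where
  "stouffer_factor l q = (if 0 < q \<and> q < 1 then exp (l * normal_score q - l\<^sup>2 / 2) else 0)"

lemma stouffer_factor_nonneg: "0 \<le> stouffer_factor l q"
  by (simp add: stouffer_factor_def)

lemma borel_measurable_stouffer_factor [measurable]: "stouffer_factor l \<in> borel_measurable borel"
  unfolding stouffer_factor_def by measurable

lemma (in prob_space) nn_integral_stouffer_factor_le_1:
  fixes X :: "'a \<Rightarrow> real"
  assumes X [measurable]: "X \<in> borel_measurable M" and "0 < l"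
    and super_uniform: "\<And>t. t \<in> {0..1} \<Longrightarrow> prob {x \<in> space M. X x \<le> t} \<le> t"
  shows "(\<integral>\<^sup>+x. ennreal (stouffer_factor l (X x)) \<partial>M) \<le> 1"
proof -
  have "(\<integral>\<^sup>+x. ennreal (stouffer_factor l (X x)) \<partial>M) \<le> (\<integral>\<^sup>+z. ennreal (exp (l * z - l\<^sup>2 / 2)) \<partial>N01)"
  \<comment> \<open>The factor decreases in q, so its upper level sets are lower tails of X, which
    super-uniformity compares with the matching Gaussian tails.\<close>
  proof (rule nn_integral_mono_tail)
    fix s :: real assume "0 < s"
    define t where "t = (ln s + l\<^sup>2 / 2) / l"
    have tilt_iff: "s < exp (l * z - l\<^sup>2 / 2) \<longleftrightarrow> t < z" for z
      using \<open>0 < s\<close> \<open>0 < l\<close> by (simp add: t_def ln_less_cancel_iff[symmetric] field_simps)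
    have "{x\<in>space M. s < stouffer_factor l (X x)} \<subseteq> {x\<in>space M. X x \<le> 1 - Phi t}"
      using \<open>0 < s\<close> by (auto simp: stouffer_factor_def tilt_iff less_normal_score_iff split: if_splits)
    then have "emeasure M {x\<in>space M. s < stouffer_factor l (X x)} \<le> prob {x\<in>space M. X x \<le> 1 - Phi t}"
      by (simp add: emeasure_eq_measure finite_measure_mono)
    also have "\<dots> \<le> 1 - Phi t"
      using super_uniform[of "1 - Phi t"] N01.cdf_nonneg N01.cdf_bounded_prob
      by (simp add: Phi_eq_cdf)
    also have "1 - Phi t = measure N01 {t<..}"
      using N01.prob_compl[of "{..t}"] by (simp add: Phi_eq_cdf cdf_def Compl_eq_Diff_UNIV[symmetric])
    also have "{t<..} = {z\<in>space N01. s < exp (l * z - l\<^sup>2 / 2)}"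
      by (auto simp: tilt_iff)
    finally show "emeasure M {x\<in>space M. s < stouffer_factor l (X x)}
        \<le> emeasure N01 {z\<in>space N01. s < exp (l * z - l\<^sup>2 / 2)}"
      by (simp add: N01.emeasure_eq_measure)
  qed (auto simp: stouffer_factor_nonneg intro: prob_space_imp_sigma_finite prob_space_axioms N01.prob_space_axioms)
  then show ?thesis by (simp add: nn_integral_std_normal_exp_tilt)
qed

(* The running product, stopped once it reaches c: the stopped supermartingale of Ville's argument. *)
primrec stopped_prod :: "ennreal \<Rightarrow> (nat \<Rightarrow> ennreal) \<Rightarrow> nat \<Rightarrow> ennreal" where
  "stopped_prod c \<omega> 0 = 1"
| "stopped_prod c \<omega> (Suc k) =
    (if stopped_prod c \<omega> k < c then stopped_prod c \<omega> k * \<omega> (Suc k) else stopped_prod c \<omega> k)"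

lemma stopped_prod_cong:
  "(\<And>i. i \<in> {1..k} \<Longrightarrow> \<omega> i = \<omega>' i) \<Longrightarrow> stopped_prod c \<omega> k = stopped_prod c \<omega>' k"
  by (induction k) auto

lemma stopped_prod_eq_prod_if_less:
  "stopped_prod c \<omega> k < c \<Longrightarrow> stopped_prod c \<omega> k = (\<Prod>i\<in>{1..k}. \<omega> i)"
  by (induction k) (auto simp: prod.nat_ivl_Suc' mult.commute split: if_splits)

lemma le_stopped_prod_mono:
  assumes "c \<le> stopped_prod c \<omega> k" "k \<le> n"
  shows "c \<le> stopped_prod c \<omega> n"
  using assms(2) by (induction n rule: dec_induct) (use assms(1) in auto)

lemma le_stopped_prod:
  assumes "c \<le> (\<Prod>i\<in>{1..k}. \<omega> i)" "k \<le> n"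
  shows "c \<le> stopped_prod c \<omega> n"
proof (rule le_stopped_prod_mono[OF _ assms(2)])
  show "c \<le> stopped_prod c \<omega> k"
    using assms(1) stopped_prod_eq_prod_if_less[of c \<omega> k] by (metis not_le)
qed

lemma measurable_stopped_prod:
  assumes "\<And>i. i \<in> {1..k} \<Longrightarrow> (\<lambda>x. f x i) \<in> borel_measurable N"
  shows "(\<lambda>x. stopped_prod c (f x) k) \<in> borel_measurable N"
  using assms by (induction k) auto

lemma (in prob_space) indep_var_nn_integral:
  fixes X Y :: "'a \<Rightarrow> ennreal"
  assumes "indep_var borel X borel Y"
  shows "(\<integral>\<^sup>+\<omega>. X \<omega> * Y \<omega> \<partial>M) = (\<integral>\<^sup>+\<omega>. X \<omega> \<partial>M) * (\<integral>\<^sup>+\<omega>. Y \<omega> \<partial>M)"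
proof -
  have "case_bool borel borel = (\<lambda>_::bool. borel :: ennreal measure)"
    by (rule ext) (simp split: bool.split)
  then have "indep_vars (\<lambda>_. borel) (case_bool X Y) UNIV"
    using assms by (simp add: indep_var_def)
  then have "(\<integral>\<^sup>+\<omega>. (\<Prod>b\<in>UNIV. case_bool X Y b \<omega>) \<partial>M) = (\<Prod>b\<in>UNIV. \<integral>\<^sup>+\<omega>. case_bool X Y b \<omega> \<partial>M)"
    by (intro indep_vars_nn_integral) auto
  then show ?thesis by (simp add: UNIV_bool mult.commute)
qed

lemma (in prob_space) nn_integral_indep_restrict_mult:
  fixes X :: "'i \<Rightarrow> 'a \<Rightarrow> ennreal"
  assumes "indep_vars (\<lambda>_. borel) X I" "J \<subseteq> I" "i \<in> I - J"
    and g: "g \<in> borel_measurable (PiM J (\<lambda>_. borel))"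
  shows "(\<integral>\<^sup>+x. g (restrict (\<lambda>j. X j x) J) * X i x \<partial>M)
    = (\<integral>\<^sup>+x. g (restrict (\<lambda>j. X j x) J) \<partial>M) * (\<integral>\<^sup>+x. X i x \<partial>M)"
proof (rule indep_var_nn_integral)
  have "indep_var borel (g \<circ> (\<lambda>x. restrict (\<lambda>j. X j x) J)) borel ((\<lambda>\<omega>. \<omega> i) \<circ> (\<lambda>x. restrict (\<lambda>j. X j x) {i}))"
    using assms by (intro indep_var_compose[OF indep_var_restrict[OF assms(1)]] g) auto
  then show "indep_var borel (\<lambda>x. g (restrict (\<lambda>j. X j x) J)) borel (X i)"
    by (simp add: comp_def)
qed

lemma (in prob_space) nn_integral_stopped_prod_le_1:
  fixes X :: "nat \<Rightarrow> 'a \<Rightarrow> ennreal"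
  assumes indep: "indep_vars (\<lambda>_. borel) X {1..N}"
    and mean: "\<And>i. i \<in> {1..N} \<Longrightarrow> (\<integral>\<^sup>+x. X i x \<partial>M) \<le> 1"
  shows "(\<integral>\<^sup>+x. stopped_prod c (\<lambda>i. X i x) N \<partial>M) \<le> 1"
proof -
  have [measurable]: "X i \<in> borel_measurable M" if "i \<in> {1..N}" for i
    using indep that by (auto simp: indep_vars_def)
  have "(\<integral>\<^sup>+x. stopped_prod c (\<lambda>i. X i x) n \<partial>M) \<le> 1" if "n \<le> N" for n
    using that
  proof (induction n)
    case 0
    then show ?case by (simp add: emeasure_space_1)
  next
    case (Suc n)
    define S where "S x = stopped_prod c (\<lambda>i. X i x) n" for x
    define g where "g \<omega> = (if stopped_prod c \<omega> n < c then stopped_prod c \<omega> n else 0)" for \<omega>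
    have [measurable]: "S \<in> borel_measurable M"
      unfolding S_def using Suc.prems by (intro measurable_stopped_prod) auto
    have [measurable]: "X (Suc n) \<in> borel_measurable M"
      using Suc.prems by simp
    have g_restrict: "g (restrict (\<lambda>i. X i x) {1..n}) = (if S x < c then S x else 0)" for x
      using stopped_prod_cong[of n "restrict (\<lambda>i. X i x) {1..n}" "\<lambda>i. X i x" c]
      by (simp add: g_def S_def)
    have [measurable]: "(\<lambda>\<omega>. stopped_prod c \<omega> n) \<in> borel_measurable (PiM {1..n} (\<lambda>_. borel))"
      using measurable_stopped_prod[of n "\<lambda>\<omega> i. \<omega> i"] by simp
    have "g \<in> borel_measurable (PiM {1..n} (\<lambda>_. borel))"
      unfolding g_def by measurable
    then have indep_step: "(\<integral>\<^sup>+x. (if S x < c then S x else 0) * X (Suc n) x \<partial>M)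
        = (\<integral>\<^sup>+x. (if S x < c then S x else 0) \<partial>M) * (\<integral>\<^sup>+x. X (Suc n) x \<partial>M)"
      using nn_integral_indep_restrict_mult[OF indep, of "{1..n}" "Suc n" g] Suc.prems
      unfolding g_restrict by simp
    have "(\<integral>\<^sup>+x. stopped_prod c (\<lambda>i. X i x) (Suc n) \<partial>M)
        = (\<integral>\<^sup>+x. (if S x < c then S x else 0) * X (Suc n) x + (if S x < c then 0 else S x) \<partial>M)"
      by (intro nn_integral_cong) (simp add: S_def)
    also have "\<dots> = (\<integral>\<^sup>+x. (if S x < c then S x else 0) \<partial>M) * (\<integral>\<^sup>+x. X (Suc n) x \<partial>M)
        + (\<integral>\<^sup>+x. (if S x < c then 0 else S x) \<partial>M)"
      by (subst nn_integral_add) (simp_all add: indep_step)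
    also have "\<dots> \<le> (\<integral>\<^sup>+x. (if S x < c then S x else 0) \<partial>M) + (\<integral>\<^sup>+x. (if S x < c then 0 else S x) \<partial>M)"
      using mean[of "Suc n"] Suc.prems by (intro add_right_mono mult_left_le) auto
    also have "\<dots> = (\<integral>\<^sup>+x. S x \<partial>M)"
      by (subst nn_integral_add[symmetric]) (auto intro!: nn_integral_cong)
    also have "\<dots> \<le> 1"
      using Suc by (simp add: S_def)
    finally show ?case .
  qed
  then show ?thesis by simp
qed

lemma sets_Collect_ex_le_prod:
  fixes X :: "nat \<Rightarrow> 'a \<Rightarrow> ennreal" and K :: "nat set"
  assumes "\<And>k i. k \<in> K \<Longrightarrow> i \<in> {1..k} \<Longrightarrow> X i \<in> borel_measurable M"
  shows "{x\<in>space M. \<exists>k\<in>K. c \<le> (\<Prod>i\<in>{1..k}. X i x)} \<in> sets M"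
proof (intro sets.sets_Collect_countable_Ex')
  fix k assume "k \<in> K"
  then have [measurable]: "X i \<in> borel_measurable M" if "i \<in> {1..k}" for i
    using assms that by blast
  show "{x\<in>space M. c \<le> (\<Prod>i\<in>{1..k}. X i x)} \<in> sets M"
    by measurable
qed simp

definition initial_segment :: "nat set \<Rightarrow> bool" where
  "initial_segment I \<longleftrightarrow> (\<forall>N. \<exists>N'. I \<inter> {..N} = {1..N'})"

lemma initial_segmentI:
  fixes I :: "nat set"
  assumes "(\<exists>n. I = {1..n}) \<or> I = {1..}"
  shows "initial_segment I"
  unfolding initial_segment_def
proof
  fix N
  from assms obtain N' where "I \<inter> {..N} = {1..N'}"
  proof
    assume "\<exists>n. I = {1..n}"
    then obtain n where "I = {1..n}" by blast
    then have "I \<inter> {..N} = {1..min n N}" by auto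
    then show ?thesis by (rule that)
  next
    assume "I = {1..}"
    then have "I \<inter> {..N} = {1..N}" by auto
    then show ?thesis by (rule that)
  qed
  then show "\<exists>N'. I \<inter> {..N} = {1..N'}" by blast
qed

lemma initial_segment_atMost:
  assumes "initial_segment I"
  obtains N' where "I \<inter> {..N} = {1..N'}"
  using assms by (auto simp: initial_segment_def)

lemma initial_segment_prefix:
  assumes "initial_segment I" "k \<in> I"
  shows "1 \<le> k" "{1..k} \<subseteq> I"
proof -
  obtain N' where N': "I \<inter> {..k} = {1..N'}"
    using assms(1) by (rule initial_segment_atMost)
  have "k \<in> I \<inter> {..k}" using assms(2) by simp
  then show "1 \<le> k" "{1..k} \<subseteq> I"
    unfolding N' using N' by auto
qed

lemma (in prob_space) ville_inequality_finite:
  fixes X :: "nat \<Rightarrow> 'a \<Rightarrow> ennreal"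
  assumes indep: "indep_vars (\<lambda>_. borel) X {1..N}"
    and mean: "\<And>i. i \<in> {1..N} \<Longrightarrow> (\<integral>\<^sup>+x. X i x \<partial>M) \<le> 1" and "0 < \<delta>"
  shows "emeasure M {x\<in>space M. \<exists>k\<in>{1..N}. ennreal (1 / \<delta>) \<le> (\<Prod>i\<in>{1..k}. X i x)} \<le> \<delta>"
proof -
  define c where "c = ennreal (1 / \<delta>)"
  define F where "F = {x\<in>space M. c \<le> stopped_prod c (\<lambda>i. X i x) N}"
  have [measurable]: "(\<lambda>x. stopped_prod c (\<lambda>i. X i x) N) \<in> borel_measurable M"
    using indep by (intro measurable_stopped_prod) (auto simp: indep_vars_def)
  have "c * emeasure M F = (\<integral>\<^sup>+x. c * indicator F x \<partial>M)"
    by (simp add: F_def nn_integral_cmult_indicator)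
  also have "\<dots> \<le> (\<integral>\<^sup>+x. stopped_prod c (\<lambda>i. X i x) N \<partial>M)"
    by (intro nn_integral_mono) (auto simp: F_def indicator_def)
  also have "\<dots> \<le> 1"
    by (rule nn_integral_stopped_prod_le_1[OF indep mean])
  finally have "c * emeasure M F \<le> 1" .
  have "{x\<in>space M. \<exists>k\<in>{1..N}. c \<le> (\<Prod>i\<in>{1..k}. X i x)} \<subseteq> F"
    by (auto simp: F_def intro: le_stopped_prod)
  then have "emeasure M {x\<in>space M. \<exists>k\<in>{1..N}. c \<le> (\<Prod>i\<in>{1..k}. X i x)} \<le> emeasure M F"
    by (rule emeasure_mono) (simp add: F_def)
  also have "\<dots> = ennreal \<delta> * (c * emeasure M F)"
    using \<open>0 < \<delta>\<close> by (simp add: c_def mult.assoc[symmetric] ennreal_mult[symmetric])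
  also have "\<dots> \<le> ennreal \<delta>"
    using mult_left_mono[OF \<open>c * emeasure M F \<le> 1\<close>, of "ennreal \<delta>"] by simp
  finally show ?thesis unfolding c_def .
qed

lemma (in prob_space) ville_inequality:
  fixes X :: "nat \<Rightarrow> 'a \<Rightarrow> ennreal"
  assumes I: "initial_segment I"
    and indep: "indep_vars (\<lambda>_. borel) X I"
    and mean: "\<And>i. i \<in> I \<Longrightarrow> (\<integral>\<^sup>+x. X i x \<partial>M) \<le> 1" and "0 < \<delta>"
  shows "emeasure M {x\<in>space M. \<exists>k\<in>I. ennreal (1 / \<delta>) \<le> (\<Prod>i\<in>{1..k}. X i x)} \<le> \<delta>"
proof -
  define E where "E N = {x\<in>space M. \<exists>k\<in>I \<inter> {..N}. ennreal (1 / \<delta>) \<le> (\<Prod>i\<in>{1..k}. X i x)}" for N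
  have E_sets: "E N \<in> sets M" for N
    unfolding E_def using initial_segment_prefix(2)[OF I] indep
    by (intro sets_Collect_ex_le_prod) (auto simp: indep_vars_def subset_iff)
  have "emeasure M (E N) \<le> \<delta>" for N
  proof -
    obtain N' where N': "I \<inter> {..N} = {1..N'}"
      using I by (rule initial_segment_atMost)
    then have "{1..N'} \<subseteq> I" by auto
    then show ?thesis
      unfolding E_def N' using \<open>0 < \<delta>\<close>
      by (intro ville_inequality_finite indep_vars_subset[OF indep] mean) auto
  qed
  then have "emeasure M (\<Union>N. E N) \<le> \<delta>"
    using E_sets by (subst SUP_emeasure_incseq[symmetric]) (auto simp: incseq_def E_def intro!: SUP_least)
  moreover have "(\<Union>N. E N) = {x\<in>space M. \<exists>k\<in>I. ennreal (1 / \<delta>) \<le> (\<Prod>i\<in>{1..k}. X i x)}"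
    by (auto simp: E_def)
  ultimately show ?thesis by simp
qed

lemma u_linear_tilt_identity:
  assumes "0 < \<delta>" "\<delta> \<le> 1" "0 < m"
  defines "l \<equiv> sqrt (2 * - ln \<delta> / m)"
  shows "l * u_linear \<delta> m k - real k * l\<^sup>2 / 2 = - ln \<delta>"
proof -
  define L where "L = - ln \<delta>"
  have "0 \<le> L" using assms by (simp add: L_def)
  have "l * sqrt (L / (2 * m)) = sqrt ((L / m)\<^sup>2)"
    unfolding l_def L_def[symmetric] real_sqrt_mult[symmetric]
    using assms(3) by (simp add: power2_eq_square field_simps)
  then have slope: "l * sqrt (L / (2 * m)) = L / m"
    using \<open>0 \<le> L\<close> assms(3) by simp
  have "l * sqrt (- m * ln \<delta> / 2) = sqrt (L\<^sup>2)"
    unfolding l_def L_def[symmetric] real_sqrt_mult[symmetric]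
    using assms(3) by (simp add: L_def power2_eq_square field_simps)
  then have intercept: "l * sqrt (- m * ln \<delta> / 2) = L"
    using \<open>0 \<le> L\<close> by simp
  have square: "l\<^sup>2 = 2 * L / m"
    using \<open>0 \<le> L\<close> assms(3) by (simp add: l_def L_def divide_nonpos_pos)
  have "l * u_linear \<delta> m k = l * sqrt (L / (2 * m)) * real k + l * sqrt (- m * ln \<delta> / 2)"
    unfolding u_linear_def L_def distrib_left mult.assoc ..
  also have "\<dots> = L / m * real k + L"
    unfolding slope intercept ..
  finally show ?thesis
    using assms(3) unfolding square L_def[symmetric] by (simp add: field_simps)
qed

lemma sum_Phi_inv_one_minus_ge:
  fixes q :: "nat \<Rightarrow> real"
  assumes "finite A" and pos: "\<And>i. i \<in> A \<Longrightarrow> 0 < q i"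
    and ge: "ereal u \<le> (\<Sum>i\<in>A. Phi_inv (1 - q i))"
  shows "\<forall>i\<in>A. q i < 1" and "u \<le> (\<Sum>i\<in>A. normal_score (q i))"
proof -
  show lt1: "\<forall>i\<in>A. q i < 1"
  proof (rule ccontr)
    assume "\<not> (\<forall>i\<in>A. q i < 1)"
    then obtain i where i: "i \<in> A" "1 \<le> q i" by auto
    have "Phi_inv (1 - q j) \<noteq> \<infinity>" if "j \<in> A" for j
      using pos[OF that] by (simp add: Phi_inv_def)
    then have "(\<Sum>j\<in>A - {i}. Phi_inv (1 - q j)) \<noteq> \<infinity>"
      by (simp add: sum_Pinfty)
    moreover have "Phi_inv (1 - q i) = -\<infinity>"
      using i by (simp add: Phi_inv_def)
    ultimately have "(\<Sum>j\<in>A. Phi_inv (1 - q j)) = -\<infinity>"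
      using i \<open>finite A\<close> by (simp add: sum.remove)
    then show False using ge by simp
  qed
  have "(\<Sum>i\<in>A. Phi_inv (1 - q i)) = (\<Sum>i\<in>A. ereal (normal_score (q i)))"
    using pos lt1 by (intro sum.cong) (auto simp: Phi_inv_one_minus)
  then show "u \<le> (\<Sum>i\<in>A. normal_score (q i))"
    using ge by simp
qed

lemma prod_stouffer_factor_ge:
  fixes q :: "nat \<Rightarrow> real"
  assumes "0 < \<delta>" "\<delta> \<le> 1" "0 < m"
    and q: "\<And>i. i \<in> {1..k} \<Longrightarrow> 0 < q i \<and> q i < 1"
    and ge: "u_linear \<delta> m k \<le> (\<Sum>i\<in>{1..k}. normal_score (q i))"
  shows "1 / \<delta> \<le> (\<Prod>i\<in>{1..k}. stouffer_factor (sqrt (2 * - ln \<delta> / m)) (q i))"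
proof -
  define l where "l = sqrt (2 * - ln \<delta> / m)"
  have "0 \<le> l" using assms by (simp add: l_def divide_nonpos_pos)
  have tilt: "l * u_linear \<delta> m k - real k * l\<^sup>2 / 2 = - ln \<delta>"
    unfolding l_def by (rule u_linear_tilt_identity[OF assms(1-3)])
  have "1 / \<delta> = exp (l * u_linear \<delta> m k - real k * l\<^sup>2 / 2)"
    unfolding tilt using assms(1) by (simp add: exp_minus inverse_eq_divide)
  also have "\<dots> \<le> exp (l * (\<Sum>i\<in>{1..k}. normal_score (q i)) - real k * l\<^sup>2 / 2)"
    using ge \<open>0 \<le> l\<close> by (simp add: mult_left_mono)
  also have "\<dots> = (\<Prod>i\<in>{1..k}. exp (l * normal_score (q i) - l\<^sup>2 / 2))"
    by (simp add: exp_sum[symmetric] sum_subtractf sum_distrib_left)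
  also have "\<dots> = (\<Prod>i\<in>{1..k}. stouffer_factor l (q i))"
    using q by (intro prod.cong) (auto simp: stouffer_factor_def)
  finally show ?thesis by (simp add: l_def)
qed

definition stouffer_crossing :: "'a measure \<Rightarrow> (nat \<Rightarrow> 'a \<Rightarrow> real) \<Rightarrow> nat set \<Rightarrow> (nat \<Rightarrow> real) \<Rightarrow> 'a set"
  where "stouffer_crossing M p I u =
    {x \<in> space M. \<exists>k\<in>I. (\<Sum>i\<in>{1..k}. Phi_inv (1 - p i x)) \<ge> ereal (u k)}"

lemma sets_stouffer_crossing:
  assumes "initial_segment I" "\<And>i. i \<in> I \<Longrightarrow> p i \<in> borel_measurable M"
  shows "stouffer_crossing M p I u \<in> sets M"
  unfolding stouffer_crossing_def
proof (intro sets.sets_Collect_countable_Ex')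
  fix k assume "k \<in> I"
  then have [measurable]: "p i \<in> borel_measurable M" if "i \<in> {1..k}" for i
    using assms initial_segment_prefix(2) that by blast
  show "{x \<in> space M. ereal (u k) \<le> (\<Sum>i\<in>{1..k}. Phi_inv (1 - p i x))} \<in> sets M"
    by measurable
qed simp

lemma (in prob_space) stouffer_linear_boundary:
  fixes p :: "nat \<Rightarrow> 'a \<Rightarrow> real" and I :: "nat set"
  assumes I: "initial_segment I"
    and indep: "indep_vars (\<lambda>_. borel) p I"
    and super_uniform: "\<And>i t. i \<in> I \<Longrightarrow> t \<in> {0..1} \<Longrightarrow> prob {x \<in> space M. p i x \<le> t} \<le> t"
    and \<delta>: "0 < \<delta>" "\<delta> < 1" and "0 < m"
  shows "emeasure M (stouffer_crossing M p I (u_linear \<delta> m)) \<le> \<delta>"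
proof -
  define l where "l = sqrt (2 * - ln \<delta> / m)"
  have "0 < l"
    using \<delta> \<open>0 < m\<close> by (simp add: l_def divide_neg_pos)
  have rv [measurable]: "p i \<in> borel_measurable M" if "i \<in> I" for i
    using indep that by (auto simp: indep_vars_def)
  define V where "V = {x\<in>space M. \<exists>k\<in>I. ennreal (1 / \<delta>) \<le> (\<Prod>i\<in>{1..k}. ennreal (stouffer_factor l (p i x)))}"
  define Z where "Z = (\<Union>i\<in>I. {x\<in>space M. p i x \<le> 0})"
  have V_le: "emeasure M V \<le> \<delta>"
    unfolding V_def using \<delta> \<open>0 < l\<close>
    by (intro ville_inequality[OF I] indep_vars_compose2[OF indep] nn_integral_stouffer_factor_le_1
        super_uniform rv) auto
  have "V \<in> sets M"
    unfolding V_def using initial_segment_prefix(2)[OF I] rv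
    by (intro sets_Collect_ex_le_prod) (auto simp: subset_iff)
  have "Z \<in> null_sets M"
    unfolding Z_def
  proof (intro null_sets_UN')
    fix i assume "i \<in> I"
    then have "prob {x\<in>space M. p i x \<le> 0} = 0"
      using super_uniform[of i 0] measure_nonneg[of M] by (simp add: order_antisym)
    then show "{x\<in>space M. p i x \<le> 0} \<in> null_sets M"
      using \<open>i \<in> I\<close> by (simp add: emeasure_eq_measure null_sets_def)
  qed simp
  have "stouffer_crossing M p I (u_linear \<delta> m) \<subseteq> V \<union> Z"
    unfolding stouffer_crossing_def
  proof safe
    fix x k assume x: "x \<in> space M" "x \<notin> Z" and "k \<in> I"
      and crossing: "ereal (u_linear \<delta> m k) \<le> (\<Sum>i\<in>{1..k}. Phi_inv (1 - p i x))"
    then have pos: "0 < p i x" if "i \<in> {1..k}" for i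
      using initial_segment_prefix(2)[OF I \<open>k \<in> I\<close>] that by (force simp: Z_def)
    have "1 / \<delta> \<le> (\<Prod>i\<in>{1..k}. stouffer_factor l (p i x))"
      unfolding l_def using \<delta> \<open>0 < m\<close> pos sum_Phi_inv_one_minus_ge[OF _ _ crossing]
      by (intro prod_stouffer_factor_ge) auto
    then have "ennreal (1 / \<delta>) \<le> (\<Prod>i\<in>{1..k}. ennreal (stouffer_factor l (p i x)))"
      by (simp add: prod_ennreal stouffer_factor_nonneg ennreal_leI)
    then show "x \<in> V"
      using x \<open>k \<in> I\<close> by (auto simp: V_def)
  qed
  then have "emeasure M (stouffer_crossing M p I (u_linear \<delta> m)) \<le> emeasure M (V \<union> Z)"
    using \<open>V \<in> sets M\<close> \<open>Z \<in> null_sets M\<close> by (intro emeasure_mono) auto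
  also have "\<dots> = emeasure M V"
    using \<open>V \<in> sets M\<close> \<open>Z \<in> null_sets M\<close> by (rule emeasure_Un_null_set)
  finally show ?thesis
    using V_le by simp
qed

lemma powr_neg_midpoint_le:
  fixes x y s :: real
  assumes "0 \<le> s" "0 \<le> y" "y < x"
  shows "2 * x powr (-s) \<le> (x - y) powr (-s) + (x + y) powr (-s)"
proof -
  define a where "a = (x - y) powr (-s)"
  define b where "b = (x + y) powr (-s)"
  have "0 \<le> a" "0 \<le> b" by (simp_all add: a_def b_def)
  have "(x * x) powr (-s) \<le> ((x - y) * (x + y)) powr (-s)"
    using assms by (intro powr_mono2') (auto simp: algebra_simps intro!: mult_strict_mono)
  then have "x powr (-s) * x powr (-s) \<le> a * b"
    using assms by (simp add: a_def b_def powr_mult)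
  also have "\<dots> \<le> ((a + b) / 2)\<^sup>2"
  proof -
    have "((a + b) / 2)\<^sup>2 - a * b = ((a - b) / 2)\<^sup>2"
      by (simp add: power2_eq_square field_simps)
    then show ?thesis by (metis diff_ge_0_iff_ge zero_le_power2)
  qed
  finally have "(x powr (-s))\<^sup>2 \<le> ((a + b) / 2)\<^sup>2"
    by (simp add: power2_eq_square)
  from power2_le_imp_le[OF this] have "x powr (-s) \<le> (a + b) / 2"
    using \<open>0 \<le> a\<close> \<open>0 \<le> b\<close> by simp
  then show ?thesis by (simp add: a_def b_def)
qed

lemma powr_neg_diff_ge:
  fixes x h r :: real
  assumes "0 < r" "0 \<le> h" "h < x"
  shows "2 * r * h * x powr (-(r + 1)) \<le> (x - h) powr (-r) - (x + h) powr (-r)"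
proof -
  define g where "g y = (x - y) powr (-r) - (x + y) powr (-r) - 2 * r * y * x powr (-(r + 1))" for y
  define g' where "g' y = r * ((x - y) powr (-(r + 1)) + (x + y) powr (-(r + 1)) - 2 * x powr (-(r + 1)))"
    for y
  have "(g has_real_derivative g' y) (at y)" if "y \<in> {0..h}" for y
  proof -
    have pos: "0 < x - y" "0 < x + y" using that assms by auto
    then have "((\<lambda>y. (x - y) powr (-r)) has_real_derivative (-r) * (x - y) powr (-r - 1) * (-1)) (at y)"
      and "((\<lambda>y. (x + y) powr (-r)) has_real_derivative (-r) * (x + y) powr (-r - 1) * 1) (at y)"
      by (auto intro!: DERIV_fun_powr[where r="-r", simplified] derivative_eq_intros)
    then have "(g has_real_derivative
        (-r) * (x - y) powr (-r - 1) * (-1) - (-r) * (x + y) powr (-r - 1) * 1 - 2 * r * x powr (-(r + 1)))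
        (at y)"
      unfolding g_def using pos by (auto intro!: derivative_eq_intros)
    moreover have "- r - 1 = - (r + 1)" by simp
    ultimately show ?thesis
      unfolding g'_def by (simp only:) (simp add: algebra_simps)
  qed
  moreover have "0 \<le> g' y" if "y \<in> {0..h}" for y
    using that assms powr_neg_midpoint_le[of "r + 1" y x] by (simp add: g'_def)
  ultimately have "g 0 \<le> g h"
    using assms by (intro deriv_nonneg_imp_mono[of 0 h g g']) auto
  then show ?thesis by (simp add: g_def)
qed

(* The differences telescope to a total of at most 1, and by convexity (powr_neg_diff_ge) each is
   bounded below by a derivative term at the midpoint 2/3 + 3/4 * j of its interval; this gives
   epoch_weight_lower_bound. *)
definition epoch_weight :: "nat \<Rightarrow> real" where
  "epoch_weight j = (if j = 0 then 0.338
     else 60/91 * ((7/24 + 3/4 * real j) powr (-7/18) - (7/24 + 3/4 * real (Suc j)) powr (-7/18)))"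

lemma epoch_weight_pos: "0 < epoch_weight j"
  by (auto simp: epoch_weight_def intro!: powr_less_mono2_neg)

lemma epoch_weight_sums: "epoch_weight sums (0.338 + 60/91 * (25/24) powr (-7/18))"
proof -
  define f where "f j = (7/24 + 3/4 * real (Suc j)) powr (-7/18)" for j
  have lim: "filterlim (\<lambda>j. 7/24 + 3/4 * real (Suc j)) at_top sequentially"
    by (intro filterlim_tendsto_add_at_top[OF tendsto_const] filterlim_tendsto_pos_mult_at_top[OF tendsto_const]
        filterlim_compose[OF filterlim_real_sequentially filterlim_Suc]) auto
  have "f \<longlonglongrightarrow> 0"
    unfolding f_def by (rule tendsto_neg_powr[OF _ lim]) simp
  then have "(\<lambda>j. 60/91 * (f j - f (Suc j))) sums (60/91 * (f 0 - 0))"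
    by (intro sums_mult telescope_sums')
  moreover have "(\<lambda>j. epoch_weight (Suc j)) = (\<lambda>j. 60/91 * (f j - f (Suc j)))"
    by (simp add: epoch_weight_def f_def fun_eq_iff)
  ultimately have "(\<lambda>j. epoch_weight (Suc j)) sums (60/91 * (25/24) powr (-7/18))"
    by (simp add: f_def)
  then show ?thesis
    by (subst (asm) sums_Suc_iff) (simp add: epoch_weight_def add.commute)
qed

lemma summable_epoch_weight: "summable epoch_weight"
  using epoch_weight_sums by (rule sums_summable)

lemma suminf_epoch_weight_le_1: "suminf epoch_weight \<le> 1"
proof -
  have "(25/24 :: real) powr (-7/18) \<le> 1 powr (-7/18)"
    by (rule powr_mono2') auto
  then show ?thesis
    using sums_unique[OF epoch_weight_sums] by simp
qed

lemma epoch_weight_le_1: "epoch_weight j \<le> 1"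
  using sum_le_suminf[OF summable_epoch_weight, of "{j}"] epoch_weight_pos suminf_epoch_weight_le_1
  by (simp add: less_imp_le)

lemma ln_11_div_5_ge: "3/4 \<le> ln (11/5 :: real)"
proof -
  have "ln (10/11 :: real) \<le> 10/11 - 1"
    by (rule ln_le_minus_one) simp
  moreover have "ln (2 / (10/11) :: real) = ln 2 - ln (10/11)"
    by (rule ln_divide_pos) auto
  ultimately show ?thesis
    using ln2_ge_two_thirds by simp
qed

lemma three_halves_powr_le: "(3/2 :: real) powr (25/18) \<le> 1.7576"
proof -
  have "((3/2 :: real) powr (25/18)) ^ 18 = (3/2) powr (25/18 * real 18)"
    by (subst powr_realpow[symmetric]) (auto simp: powr_powr)
  also have "\<dots> = (3/2) ^ 25"
    by (subst powr_realpow[symmetric]) auto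
  also have "\<dots> \<le> (1.7576 :: real) ^ 18"
    by (simp add: power_divide)
  finally show ?thesis
    by (subst (asm) power_mono_iff) auto
qed

lemma epoch_weight_lower_bound:
  "(ln 2 + real j * ln (11/5)) powr (-25/18) \<le> 5.2 * epoch_weight j"
proof (cases "j = 0")
  case True
  have "(ln 2 :: real) powr (-25/18) \<le> (2/3) powr (-25/18)"
    by (rule powr_mono2') (use ln2_ge_two_thirds in auto)
  also have "\<dots> = (3/2) powr (25/18)"
    by (simp add: powr_minus_divide powr_divide)
  also have "\<dots> \<le> 1.7576"
    by (rule three_halves_powr_le)
  finally show ?thesis
    using True by (simp add: epoch_weight_def)
next
  case False
  define x where "x = 2/3 + 3/4 * real j"
  have "x \<le> ln 2 + real j * ln (11/5)"
    using mult_left_mono[OF ln_11_div_5_ge, of "real j"] ln2_ge_two_thirds by (simp add: x_def)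
  then have "(ln 2 + real j * ln (11/5)) powr (-25/18) \<le> x powr (-25/18)"
    by (intro powr_mono2') (auto simp: x_def)
  also have "\<dots> = 24/7 * (2 * (7/18) * (3/8) * x powr (-(7/18 + 1)))"
    by simp
  also have "\<dots> \<le> 24/7 * ((x - 3/8) powr (-(7/18)) - (x + 3/8) powr (-(7/18)))"
    by (intro mult_left_mono powr_neg_diff_ge) (auto simp: x_def)
  also have "x - 3/8 = 7/24 + 3/4 * real j"
    by (simp add: x_def)
  also have "x + 3/8 = 7/24 + 3/4 * real (Suc j)"
    by (simp add: x_def field_simps)
  also have "24/7 * ((7/24 + 3/4 * real j) powr (-(7/18)) - (7/24 + 3/4 * real (Suc j)) powr (-(7/18)))
      = 5.2 * epoch_weight j"
    using False by (simp add: epoch_weight_def)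
  finally show ?thesis .
qed

lemma minus_ln_epoch_weight_le:
  "- ln (epoch_weight j) \<le> ln 5.2 + 25/18 * ln (ln 2 + real j * ln (11/5))"
proof -
  define X where "X = ln 2 + real j * ln (11/5 :: real)"
  have "0 < X"
    using ln_11_div_5_ge ln2_ge_two_thirds by (simp add: X_def add_pos_nonneg)
  have "- 25/18 * ln X = ln (X powr (-25/18))"
    using \<open>0 < X\<close> by (simp add: ln_powr)
  also have "\<dots> \<le> ln (5.2 * epoch_weight j)"
    using epoch_weight_lower_bound[of j, folded X_def] \<open>0 < X\<close> epoch_weight_pos[of j]
    by (subst ln_le_cancel_iff) auto
  also have "\<dots> = ln 5.2 + ln (epoch_weight j)"
    using epoch_weight_pos[of j] by (intro ln_mult_pos) auto
  finally show ?thesis by (simp add: X_def)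
qed

lemma epoch_aspect_le:
  "1 + ((11/5)^j + (11/5)^Suc j) / (2 * sqrt ((11/5)^j * (11/5)^Suc j)) \<le> (2.0808 :: real)"
proof -
  define A :: real where "A = (11/5)^j"
  have "0 < A" by (simp add: A_def)
  have "2961/2000 \<le> sqrt (11/5 :: real)"
    by (rule real_le_rsqrt) (simp add: power2_eq_square)
  have "A * (A * (11/5)) = A\<^sup>2 * (11/5)"
    by (simp add: power2_eq_square)
  then have "sqrt (A * (A * (11/5))) = A * sqrt (11/5)"
    using \<open>0 < A\<close> by (simp only: real_sqrt_mult) simp
  then have "(A + A * (11/5)) / (2 * sqrt (A * (A * (11/5)))) = (16/5) / (2 * sqrt (11/5))"
    using \<open>0 < A\<close> by (simp add: field_simps)
  also have "\<dots> \<le> (16/5) / (2 * (2961/2000))"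
    using \<open>2961/2000 \<le> sqrt (11/5)\<close> by (intro divide_left_mono) auto
  finally show ?thesis
    by (simp add: A_def mult.commute)
qed

lemma u_linear_sq_le:
  fixes A B :: real
  assumes "0 < \<delta>" "\<delta> \<le> 1" "0 < A" "A \<le> real k" "real k \<le> B"
  shows "(u_linear \<delta> (sqrt (A * B)) k)\<^sup>2 \<le> - ln \<delta> * real k * (1 + (A + B) / (2 * sqrt (A * B)))"
proof -
  define m where "m = sqrt (A * B)"
  define L where "L = - ln \<delta>"
  have "0 < m" "m * m = A * B"
    using assms by (simp_all add: m_def)
  have "0 \<le> L"
    using assms by (simp add: L_def)
  have "- m * ln \<delta> / 2 = (L / (2 * m)) * m\<^sup>2"
    using \<open>0 < m\<close> by (simp add: L_def power2_eq_square field_simps)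
  then have "sqrt (- m * ln \<delta> / 2) = sqrt (L / (2 * m)) * sqrt (m\<^sup>2)"
    by (simp only: real_sqrt_mult)
  then have "sqrt (- m * ln \<delta> / 2) = sqrt (L / (2 * m)) * m"
    using \<open>0 < m\<close> by simp
  then have "u_linear \<delta> m k = sqrt (L / (2 * m)) * (real k + m)"
    by (simp add: u_linear_def L_def distrib_left)
  then have u_sq: "(u_linear \<delta> m k)\<^sup>2 = L / (2 * m) * (real k + m)\<^sup>2"
    using \<open>0 \<le> L\<close> \<open>0 < m\<close> by (simp add: power_mult_distrib)
  have "(real k - A) * (real k - B) \<le> 0"
    using assms by (intro mult_nonneg_nonpos) auto
  then have "(real k + m)\<^sup>2 \<le> real k * (A + B + 2 * m)"
    using \<open>m * m = A * B\<close> by (simp add: power2_eq_square algebra_simps)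
  then have "(u_linear \<delta> m k)\<^sup>2 \<le> L / (2 * m) * (real k * (A + B + 2 * m))"
    unfolding u_sq using \<open>0 \<le> L\<close> \<open>0 < m\<close> by (intro mult_left_mono) auto
  also have "\<dots> = L * real k * (1 + (A + B) / (2 * m))"
    using \<open>0 < m\<close> by (simp add: field_simps)
  finally show ?thesis by (simp add: m_def L_def)
qed

(* The constants of u_curved are those of this comparison: 2.0808 * 25/18 = 1.7^2 and 0.72 * 25/18 = 1. *)
lemma u_linear_epoch_le_u_curved:
  fixes \<alpha> :: real and j k :: nat
  assumes \<alpha>: "0 < \<alpha>" "\<alpha> < 1" and k: "(11/5)^j \<le> real k" "real k \<le> (11/5)^Suc j"
  shows "u_linear (\<alpha> * epoch_weight j) (sqrt ((11/5)^j * (11/5)^Suc j)) k \<le> u_curved \<alpha> k"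
proof -
  define w where "w = epoch_weight j"
  define T where "T = ln (ln (2 * real k)) + 0.72 * ln (5.2 / \<alpha>)"
  have w: "0 < w" "w \<le> 1"
    using epoch_weight_pos epoch_weight_le_1 by (simp_all add: w_def)
  have "(1 :: real) \<le> (11/5)^j" by simp
  then have "1 \<le> real k" using k by linarith
  have X: "0 < ln 2 + real j * ln (11/5 :: real)"
    using ln_11_div_5_ge ln2_ge_two_thirds by (simp add: add_pos_nonneg)
  have "ln 2 + real j * ln (11/5) = ln 2 + ln ((11/5 :: real)^j)"
    by (simp add: ln_realpow)
  also have "\<dots> \<le> ln (2 * real k)"
    using k \<open>1 \<le> real k\<close> by (simp add: ln_mult_pos)
  finally have "ln (ln 2 + real j * ln (11/5)) \<le> ln (ln (2 * real k))"
    using X by simp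
  then have "- ln \<alpha> - ln w \<le> - ln \<alpha> + ln 5.2 + 25/18 * ln (ln (2 * real k))"
    using minus_ln_epoch_weight_le[of j] unfolding w_def by linarith
  also have "\<dots> = 25/18 * T"
    using \<alpha> by (simp add: T_def ln_divide_pos ln_mult_pos algebra_simps)
  finally have L: "- ln (\<alpha> * w) \<le> 25/18 * T"
    using \<alpha> w by (simp add: ln_mult_pos)
  have "0 \<le> - ln (\<alpha> * w)"
    using \<alpha> w by (simp add: mult_le_one)
  have "(u_linear (\<alpha> * w) (sqrt ((11/5)^j * (11/5)^Suc j)) k)\<^sup>2
      \<le> - ln (\<alpha> * w) * real k * (1 + ((11/5)^j + (11/5)^Suc j) / (2 * sqrt ((11/5)^j * (11/5)^Suc j)))"
    using \<alpha> w k by (intro u_linear_sq_le) (auto simp: mult_le_one)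
  also have "\<dots> \<le> - ln (\<alpha> * w) * real k * 2.0808"
    using \<open>0 \<le> - ln (\<alpha> * w)\<close> by (intro mult_left_mono epoch_aspect_le mult_nonneg_nonneg) auto
  also have "\<dots> \<le> 25/18 * T * real k * 2.0808"
    using L by (intro mult_right_mono) auto
  also have "\<dots> = 1.7\<^sup>2 * (real k * T)"
    by (simp add: power2_eq_square)
  finally have "sqrt ((u_linear (\<alpha> * w) (sqrt ((11/5)^j * (11/5)^Suc j)) k)\<^sup>2) \<le> sqrt (1.7\<^sup>2 * (real k * T))"
    by (rule real_sqrt_le_mono)
  then have "u_linear (\<alpha> * w) (sqrt ((11/5)^j * (11/5)^Suc j)) k \<le> sqrt (1.7\<^sup>2 * (real k * T))"
    unfolding real_sqrt_abs by linarith
  also have "\<dots> = u_curved \<alpha> k"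
    by (simp add: u_curved_def T_def real_sqrt_mult)
  finally show ?thesis by (simp add: w_def)
qed

lemma epoch_exists:
  assumes "1 \<le> k"
  obtains j where "(11/5 :: real)^j \<le> real k" "real k \<le> (11/5)^Suc j"
proof -
  define j where "j = nat \<lfloor>log (11/5) (real k)\<rfloor>"
  have "0 \<le> log (11/5) (real k)"
    using assms by simp
  then have "real_of_int (int j) = real_of_int \<lfloor>log (11/5) (real k)\<rfloor>"
    by (simp add: j_def)
  then have "(11/5) powr real j \<le> real k \<and> real k < (11/5) powr (real j + 1)"
    using floor_log_eq_powr_iff[of "real k" "11/5" "int j"] assms by simp
  then show ?thesis
    using that[of j] by (simp add: powr_realpow powr_add)
qed

lemma (in prob_space) stouffer_curved_boundary:
  fixes p :: "nat \<Rightarrow> 'a \<Rightarrow> real" and I :: "nat set"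
  assumes I: "initial_segment I"
    and indep: "indep_vars (\<lambda>_. borel) p I"
    and super_uniform: "\<And>i t. i \<in> I \<Longrightarrow> t \<in> {0..1} \<Longrightarrow> prob {x \<in> space M. p i x \<le> t} \<le> t"
    and \<alpha>: "0 < \<alpha>" "\<alpha> < 1"
  shows "emeasure M (stouffer_crossing M p I (u_curved \<alpha>)) \<le> \<alpha>"
proof -
  define E where "E j = stouffer_crossing M p I
    (u_linear (\<alpha> * epoch_weight j) (sqrt ((11/5)^j * (11/5)^Suc j)))" for j
  have E_sets: "E j \<in> sets M" for j
    unfolding E_def using indep by (intro sets_stouffer_crossing I) (auto simp: indep_vars_def)
  have E_le: "emeasure M (E j) \<le> \<alpha> * epoch_weight j" for j
    unfolding E_def using \<alpha> epoch_weight_pos[of j] epoch_weight_le_1[of j]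
    by (intro stouffer_linear_boundary[OF I indep super_uniform])
       (auto intro: le_less_trans[OF mult_left_le])
  have cover: "stouffer_crossing M p I (u_curved \<alpha>) \<subseteq> (\<Union>j. E j)"
  proof
    fix x assume "x \<in> stouffer_crossing M p I (u_curved \<alpha>)"
    then obtain k where x: "x \<in> space M" "k \<in> I"
      and crossing: "(\<Sum>i\<in>{1..k}. Phi_inv (1 - p i x)) \<ge> ereal (u_curved \<alpha> k)"
      by (auto simp: stouffer_crossing_def)
    obtain j where "(11/5 :: real)^j \<le> real k" "real k \<le> (11/5)^Suc j"
      using epoch_exists initial_segment_prefix(1)[OF I \<open>k \<in> I\<close>] by blast
    with \<alpha> have "u_linear (\<alpha> * epoch_weight j) (sqrt ((11/5)^j * (11/5)^Suc j)) k \<le> u_curved \<alpha> k"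
      by (rule u_linear_epoch_le_u_curved)
    then have "ereal (u_linear (\<alpha> * epoch_weight j) (sqrt ((11/5)^j * (11/5)^Suc j)) k)
        \<le> ereal (u_curved \<alpha> k)"
      by simp
    also note crossing
    finally have "x \<in> E j"
      using x unfolding E_def stouffer_crossing_def by blast
    then show "x \<in> (\<Union>j. E j)" by blast
  qed
  have "emeasure M (stouffer_crossing M p I (u_curved \<alpha>)) \<le> emeasure M (\<Union>j. E j)"
    using E_sets by (intro emeasure_mono[OF cover]) auto
  also have "\<dots> \<le> (\<Sum>j. emeasure M (E j))"
    using E_sets by (intro emeasure_subadditive_countably) auto
  also have "\<dots> \<le> (\<Sum>j. ennreal (\<alpha> * epoch_weight j))"
    by (intro suminf_le E_le) auto
  also have "\<dots> = ennreal (\<alpha> * suminf epoch_weight)"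
    using \<alpha> epoch_weight_pos summable_epoch_weight
    by (subst suminf_ennreal2) (auto intro: less_imp_le summable_mult simp: suminf_mult)
  also have "\<dots> \<le> \<alpha>"
    using \<alpha> suminf_epoch_weight_le_1 by (intro ennreal_leI) (simp add: mult_left_le)
  finally show ?thesis .
qed

theorem theorem1:
  fixes M :: "'a measure" and p :: "nat \<Rightarrow> 'a \<Rightarrow> real"
    and I :: "nat set" and \<alpha> :: real and u :: "nat \<Rightarrow> real"
  assumes "prob_space M"
    and "0 < \<alpha>" "\<alpha> < 1"
    and "(\<exists>n::nat. I = {1..n}) \<or> I = {1..}"
    and "prob_space.indep_vars M (\<lambda>_. borel) p I"
    and "\<And>i x. i \<in> I \<Longrightarrow> x \<in> space M \<Longrightarrow> p i x \<in> {0..1}"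
    and "\<And>i t. i \<in> I \<Longrightarrow> t \<in> {0..1} \<Longrightarrow>
           measure M {x \<in> space M. p i x \<le> t} \<le> t"
    and "(\<exists>m>0. u = u_linear \<alpha> m) \<or> u = u_curved \<alpha>"
  shows "measure M {x \<in> space M. \<exists>k\<in>I.
            (\<Sum>i\<in>{1..k}. Phi_inv (1 - p i x)) \<ge> ereal (u k)} \<le> \<alpha>"
proof -
  interpret prob_space M by fact
  have I: "initial_segment I"
    using assms(4) by (rule initial_segmentI)
  \<comment> \<open>The range hypothesis on the p-values is not needed: super-uniformity at t = 0 makes
    every p i positive almost surely, and p i \<ge> 1 only contributes Phi_inv (1 - p i) = -\<infinity>.\<close>
  have "emeasure M (stouffer_crossing M p I u) \<le> \<alpha>"
    using assms(8)
  proof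
    assume "\<exists>m>0. u = u_linear \<alpha> m"
    then show ?thesis
      using stouffer_linear_boundary[OF I assms(5,7,2,3)] by blast
  next
    assume "u = u_curved \<alpha>"
    then show ?thesis
      using stouffer_curved_boundary[OF I assms(5,7,2,3)] by simp
  qed
  then show ?thesis
    using assms(2) by (simp add: stouffer_crossing_def measure_def enn2real_leI)
qed

end
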